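(* Let $\tau\in(0,1)$ and $k\ge1$, and define $$\alpha_k^\tau=\sup_{0\le s\le1}\Big(s-\frac{s}{\tau}+\frac{\mathbb{E}[\min\{\mathrm{Pois}(sk),k\}]}{\tau k}\Big).$$ For every $\tau$-bounded simultaneous offering instance $I$ with $k$ positions there is $s\in[0,1]$ with $R_{\mathsf{ALG}^{s}_{\mathtt{sim}}}(I)\ge\alpha_k^\tau\,\mathrm{LP}_{\mathtt{sim}}(I)$; since $\mathsf{ALG}^s_{\mathtt{sim}}$ randomizes between two value-ordered policies, the best value-ordered policy has expected reward at least $\alpha_k^\tau\,\mathsf{OPT}_{\mathtt{sim}}(I)$.
   Context: Simultaneous offering problem: integers $1\le k\le n$; candidates with acceptance probabilities $p_i\in[0,1]$ and values $v_i\ge0$, labeled $v_1\ge\cdots\ge v_n$; a policy sends offers simultaneously to a (possibly random) set $S$; acceptances independent with probabilities $p_i$; reward $\sum_{i\in A}v_i-\max\{|A|-k,0\}$ for acceptor set $A$; $R_\pi(I)$ expected reward, $\mathsf{OPT}_{\mathtt{sim}}(I)$ its maximum. Value-ordered policy: offers to $S=\{1,\dots,m\}$ for some $m$. $\tau$-bounded: $v_i\ge\tau$ for all $i$. $V_{\mathrm{high}}=\{i:v_i>1\}$. $\mathrm{LP}_{\mathtt{sim}}(I)$: maximize $\sum_iv_ip_iy_i+z$ s.t. $z\le k-\sum_ip_iy_i$, $z\le0$, $0\le y_i\le1$. $\mathsf{ALG}^s_{\mathtt{sim}}$: take an optimal prefix-form solution $y$ of $\mathrm{LP}_{\mathtt{sim}}$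 ($y_i=1$ for $i<j$, $0$ for $i>j$) with total mass $\sum_iy_ip_i$ equal to $\min\{k,\sum_ip_i\}$ if $\sum_{i\in V_{\mathrm{high}}}p_i\le k$ and to $\sum_{i\in V_{\mathrm{high}}}p_i$ otherwise; set $\kappa=s\sum_iy_ip_i$, take $y'=(1,\dots,1,\theta,0,\dots,0)$ with $\sum_iy'_ip_i=\kappa$, and offer to each $i$ independently with probability $y'_i$. *)

theory Defs
  imports "HOL-Probability.Probability"
begin

(* Candidates are indexed 0..<n (paper: 1..n). p i = acceptance probability,
   v i = value. *)

text \<open>E[min(Pois(lam), k)], written out as the Poisson series (the library
  poisson_pmf requires rate > 0, but s = 0 must be allowed).\<close>
definition pois_min_mean :: "real \<Rightarrow> nat \<Rightarrow> real" where
  "pois_min_mean lam k = (\<Sum>j. real (min j k) * (lam ^ j / fact j * exp (- lam)))"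

definition alpha_k_tau :: "nat \<Rightarrow> real \<Rightarrow> real" where
  "alpha_k_tau k \<tau> =
     (SUP s\<in>{0..1::real}. s - s / \<tau> + pois_min_mean (s * real k) k / (\<tau> * real k))"

definition reward :: "nat \<Rightarrow> (nat \<Rightarrow> real) \<Rightarrow> nat set \<Rightarrow> real" where
  "reward k v A = (\<Sum>i\<in>A. v i) - max (real (card A) - real k) 0"

definition det_reward :: "nat \<Rightarrow> (nat \<Rightarrow> real) \<Rightarrow> (nat \<Rightarrow> real) \<Rightarrow> nat set \<Rightarrow> real" where
  "det_reward k p v S =
     (\<Sum>A\<in>Pow S. (\<Prod>i\<in>A. p i) * (\<Prod>i\<in>S - A. 1 - p i) * reward k v A)"

definition policy_reward ::
  "nat \<Rightarrow> (nat \<Rightarrow> real) \<Rightarrow> (nat \<Rightarrow> real) \<Rightarrow> nat set pmf \<Rightarrow> real" where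
  "policy_reward k p v \<pi> = measure_pmf.expectation \<pi> (\<lambda>S. det_reward k p v S)"

definition valid_policy :: "nat \<Rightarrow> nat set pmf \<Rightarrow> bool" where
  "valid_policy n \<pi> \<longleftrightarrow> (\<forall>S\<in>set_pmf \<pi>. S \<subseteq> {0..<n})"

definition OPT_sim :: "nat \<Rightarrow> nat \<Rightarrow> (nat \<Rightarrow> real) \<Rightarrow> (nat \<Rightarrow> real) \<Rightarrow> real" where
  "OPT_sim n k p v = (SUP \<pi>\<in>{\<pi>. valid_policy n \<pi>}. policy_reward k p v \<pi>)"

definition LP_sim :: "nat \<Rightarrow> nat \<Rightarrow> (nat \<Rightarrow> real) \<Rightarrow> (nat \<Rightarrow> real) \<Rightarrow> real" where
  "LP_sim n k p v = Sup {(\<Sum>i<n. v i * p i * y i) + z | y z.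
       (\<forall>i<n. 0 \<le> y i \<and> y i \<le> 1) \<and> z \<le> real k - (\<Sum>i<n. p i * y i) \<and> z \<le> 0}"

definition indep_offer :: "nat \<Rightarrow> (nat \<Rightarrow> real) \<Rightarrow> nat set pmf" where
  "indep_offer n y =
     map_pmf (\<lambda>f. {i\<in>{0..<n}. f i}) (Pi_pmf {0..<n} False (\<lambda>i. bernoulli_pmf (y i)))"

definition prefix_form :: "nat \<Rightarrow> (nat \<Rightarrow> real) \<Rightarrow> bool" where
  "prefix_form n y \<longleftrightarrow> (\<exists>j \<theta>. 0 \<le> \<theta> \<and> \<theta> \<le> 1 \<and>
      (\<forall>i<n. y i = (if i < j then 1 else if i = j then \<theta> else 0)))"

text \<open>Total mass of the optimal prefix-form LP solution used by ALG^s_sim.\<close>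
definition alg_mass :: "nat \<Rightarrow> nat \<Rightarrow> (nat \<Rightarrow> real) \<Rightarrow> (nat \<Rightarrow> real) \<Rightarrow> real" where
  "alg_mass n k p v =
     (if (\<Sum>i\<in>{i. i < n \<and> v i > 1}. p i) \<le> real k
      then min (real k) (\<Sum>i<n. p i)
      else (\<Sum>i\<in>{i. i < n \<and> v i > 1}. p i))"

definition alg_offer_vec ::
  "nat \<Rightarrow> nat \<Rightarrow> (nat \<Rightarrow> real) \<Rightarrow> (nat \<Rightarrow> real) \<Rightarrow> real \<Rightarrow> (nat \<Rightarrow> real) \<Rightarrow> bool" where
  "alg_offer_vec n k p v s y' \<longleftrightarrow> prefix_form n y' \<and>
     (\<Sum>i<n. y' i * p i) = s * alg_mass n k p v"

end

theory Submission
  imports Defs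
begin

text \<open>The reward of an acceptor set A is (\<Sum>i\<in>A. v i - 1) + min |A| k. Offering independently
  with probabilities y makes the acceptors an independent random set with probabilities y i * p i,
  so the linear part of the reward is exact, while the number of acceptors is a Bernoulli sum;
  a Bernoulli sum dominates the Poisson variable of the same mean in concave order, so the
  expected truncated part is at least E min(Pois(s M), k) when the offers have total mass s M.
  By weak duality the LP is at most the value V + min 0 (k - M) of a prefix solution y of mass
  M, and because values are decreasing the scaled prefix of mass s M keeps at least the fraction
  s of the weighted sum (\<Sum>i. (v i - 1) * y i * p i). A one-variable inequality for the
  truncated Poisson mean (monotone, concave, below the identity) turns these bounds into
  alpha_objective k \<tau> s * LP, and the maximising s gives alpha_k_tau. The second claim follows
  since OPT \<le> LP and the randomised policy mixes two value-ordered offer sets.\<close>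

section \<open>Independent random subsets\<close>

definition subset_expectation :: "'a set \<Rightarrow> ('a \<Rightarrow> real) \<Rightarrow> ('a set \<Rightarrow> real) \<Rightarrow> real" where
  "subset_expectation I q g = (\<Sum>A\<in>Pow I. (\<Prod>i\<in>A. q i) * (\<Prod>i\<in>I - A. 1 - q i) * g A)"

lemma subset_expectation_empty [simp]: "subset_expectation {} q g = g {}"
  by (simp add: subset_expectation_def)

lemma subset_expectation_insert:
  assumes fin: "finite I" and a: "a \<notin> I"
  shows "subset_expectation (insert a I) q g
       = subset_expectation I q (\<lambda>A. (1 - q a) * g A + q a * g (insert a A))"
proof -
  define w where "w J A = (\<Prod>i\<in>A. q i) * (\<Prod>i\<in>J - A. 1 - q i)" for J A
  have disj: "Pow I \<inter> insert a ` Pow I = {}" using a by auto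
  have inj: "inj_on (insert a) (Pow I)" using a by (auto simp: inj_on_def)
  have without_a: "w (insert a I) A = (1 - q a) * w I A" if "A \<in> Pow I" for A
  proof -
    have "insert a I - A = insert a (I - A)" "a \<notin> I - A" using that a by auto
    then show ?thesis using fin by (simp add: w_def)
  qed
  have with_a: "w (insert a I) (insert a A) = q a * w I A" if "A \<in> Pow I" for A
  proof -
    have "finite A" "a \<notin> A" "insert a I - insert a A = I - A"
      using that fin a finite_subset by auto
    then show ?thesis by (simp add: w_def)
  qed
  have "subset_expectation (insert a I) q g
      = (\<Sum>A\<in>Pow I. w (insert a I) A * g A) + (\<Sum>A\<in>Pow I. w (insert a I) (insert a A) * g (insert a A))"
    unfolding subset_expectation_def Pow_insert w_def[symmetric] using fin disj
    by (simp add: sum.union_disjoint sum.reindex[OF inj])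
  also have "\<dots> = (\<Sum>A\<in>Pow I. w I A * ((1 - q a) * g A + q a * g (insert a A)))"
    by (simp add: without_a with_a sum.distrib[symmetric] algebra_simps)
  finally show ?thesis by (simp add: subset_expectation_def w_def)
qed

lemma subset_expectation_cong:
  "(\<And>A. A \<subseteq> I \<Longrightarrow> g A = h A) \<Longrightarrow> subset_expectation I q g = subset_expectation I q h"
  unfolding subset_expectation_def by (intro sum.cong) auto

lemma subset_expectation_linear:
  "subset_expectation I q (\<lambda>A. a * g A + b * h A)
     = a * subset_expectation I q g + b * subset_expectation I q h"
  unfolding subset_expectation_def by (simp add: sum.distrib sum_distrib_left algebra_simps)

lemma subset_expectation_add:
  "subset_expectation I q (\<lambda>A. g A + h A) = subset_expectation I q g + subset_expectation I q h"
  using subset_expectation_linear[of I q 1 g 1 h] by simp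

lemma subset_expectation_const:
  assumes "finite I" shows "subset_expectation I q (\<lambda>A. c) = c"
  using assms by (induction I rule: finite_induct) (simp_all add: subset_expectation_insert algebra_simps)

lemma subset_expectation_mono:
  assumes "\<forall>i\<in>I. 0 \<le> q i \<and> q i \<le> 1" "\<And>A. A \<subseteq> I \<Longrightarrow> g A \<le> h A"
  shows "subset_expectation I q g \<le> subset_expectation I q h"
  unfolding subset_expectation_def
proof (rule sum_mono)
  fix A assume A: "A \<in> Pow I"
  have "0 \<le> (\<Prod>i\<in>A. q i) * (\<Prod>i\<in>I - A. 1 - q i)"
    using assms(1) A by (intro mult_nonneg_nonneg prod_nonneg) auto
  then show "(\<Prod>i\<in>A. q i) * (\<Prod>i\<in>I - A. 1 - q i) * g A \<le> (\<Prod>i\<in>A. q i) * (\<Prod>i\<in>I - A. 1 - q i) * h A"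
    using assms(2) A by (intro mult_left_mono) auto
qed

lemma subset_expectation_sum:
  assumes "finite I"
  shows "subset_expectation I q (\<lambda>A. \<Sum>i\<in>A. u i) = (\<Sum>i\<in>I. u i * q i)"
  using assms
proof (induction I rule: finite_induct)
  case (insert a I)
  have "subset_expectation (insert a I) q (\<lambda>A. \<Sum>i\<in>A. u i)
      = subset_expectation I q (\<lambda>A. (\<Sum>i\<in>A. u i) + q a * u a)"
    unfolding subset_expectation_insert[OF insert(1,2)]
  proof (rule subset_expectation_cong)
    fix A assume "A \<subseteq> I"
    then have "a \<notin> A" "finite A" using insert(1,2) finite_subset by auto
    then show "(1 - q a) * (\<Sum>i\<in>A. u i) + q a * (\<Sum>i\<in>insert a A. u i) = (\<Sum>i\<in>A. u i) + q a * u a"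
      by (simp add: algebra_simps)
  qed
  then show ?case
    using insert by (simp add: subset_expectation_add subset_expectation_const algebra_simps)
qed simp

lemma subset_expectation_compose:
  assumes "finite I"
  shows "subset_expectation I y (\<lambda>S. subset_expectation S p g)
       = subset_expectation I (\<lambda>i. y i * p i) g"
  using assms
proof (induction I arbitrary: g rule: finite_induct)
  case (insert a I)
  let ?g' = "\<lambda>A. g (insert a A)"
  have "subset_expectation (insert a I) y (\<lambda>S. subset_expectation S p g)
      = subset_expectation I y (\<lambda>S. subset_expectation S p
          (\<lambda>A. (1 - y a * p a) * g A + (y a * p a) * ?g' A))"
    unfolding subset_expectation_insert[OF insert(1,2)]
  proof (rule subset_expectation_cong)
    fix S assume "S \<subseteq> I"
    then have "a \<notin> S" "finite S" using insert(1,2) finite_subset by auto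
    then have insert_a: "subset_expectation (insert a S) p g
        = (1 - p a) * subset_expectation S p g + p a * subset_expectation S p ?g'"
      by (simp add: subset_expectation_insert subset_expectation_linear)
    show "(1 - y a) * subset_expectation S p g + y a * subset_expectation (insert a S) p g
        = subset_expectation S p (\<lambda>A. (1 - y a * p a) * g A + (y a * p a) * ?g' A)"
      unfolding subset_expectation_linear insert_a by (simp add: algebra_simps)
  qed
  also have "\<dots> = subset_expectation (insert a I) (\<lambda>i. y i * p i) g"
    using insert by (simp add: subset_expectation_insert)
  finally show ?case .
qed simp

lemma subset_expectation_insert_zero:
  assumes "finite I" "a \<notin> I" "q a = 0"
  shows "subset_expectation (insert a I) q g = subset_expectation I q g"
  using assms by (simp add: subset_expectation_insert)

lemma subset_expectation_ones:
  assumes "finite I" "\<forall>i\<in>I. q i = 1"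
  shows "subset_expectation I q g = g I"
  using assms
proof (induction I arbitrary: g rule: finite_induct)
  case (insert a I)
  then show ?case by (simp add: subset_expectation_insert)
qed simp

lemma subset_expectation_zero_tail:
  fixes m n :: nat
  assumes "m \<le> n" "\<forall>i. m \<le> i \<and> i < n \<longrightarrow> q i = 0"
  shows "subset_expectation {0..<n} q g = subset_expectation {0..<m} q g"
  using assms
proof (induction n rule: dec_induct)
  case (step n)
  then have "subset_expectation {0..<Suc n} q g = subset_expectation {0..<n} q g"
    by (simp add: atLeast0_lessThan_Suc subset_expectation_insert_zero)
  with step show ?case by simp
qed simp

section \<open>Poisson comparison\<close>

text \<open>The library's poisson_pmf requires a positive rate; rate 0 is the point mass at 0.\<close>

definition poisson :: "real \<Rightarrow> nat pmf" where
  "poisson r = (if 0 < r then poisson_pmf r else return_pmf 0)"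

lemma pmf_poisson_nonneg: "0 \<le> r \<Longrightarrow> pmf (poisson r) j = r ^ j / fact j * exp (- r)"
  by (cases "r = 0"; cases j) (auto simp: poisson_def pmf_return indicator_def)

lemma poisson_pmf_convolution:
  fixes a b :: real
  shows "(\<Sum>i\<le>m. b ^ (m - i) / fact (m - i) * exp (- b) * (a ^ i / fact i * exp (- a)))
       = (a + b) ^ m / fact m * exp (- (a + b))"
proof -
  have binomial: "(a + b) ^ m / fact m = (\<Sum>i\<le>m. a ^ i / fact i * (b ^ (m - i) / fact (m - i)))"
    unfolding binomial_ring sum_divide_distrib
    by (intro sum.cong refl) (simp add: binomial_fact field_simps)
  have "(\<Sum>i\<le>m. b ^ (m - i) / fact (m - i) * exp (- b) * (a ^ i / fact i * exp (- a)))
      = (\<Sum>i\<le>m. a ^ i / fact i * (b ^ (m - i) / fact (m - i))) * (exp (- a) * exp (- b))"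
    unfolding sum_distrib_right by (intro sum.cong refl) (simp add: mult_ac)
  also have "\<dots> = (a + b) ^ m / fact m * exp (- (a + b))"
    unfolding binomial by (simp add: exp_add[symmetric])
  finally show ?thesis .
qed

lemma poisson_add:
  assumes "0 \<le> a" "0 \<le> b"
  shows "bind_pmf (poisson a) (\<lambda>i. map_pmf ((+) i) (poisson b)) = poisson (a + b)"
proof (rule pmf_eqI)
  fix m :: nat
  have shifted: "pmf (map_pmf ((+) i) (poisson b)) m = (if i \<le> m then pmf (poisson b) (m - i) else 0)" for i
  proof -
    have "(+) i -` {m} = (if i \<le> m then {m - i} else {})" by auto
    then show ?thesis by (simp add: pmf_map measure_pmf_single)
  qed
  have "pmf (bind_pmf (poisson a) (\<lambda>i. map_pmf ((+) i) (poisson b))) m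
      = (\<Sum>i\<in>{..m}. (if i \<le> m then pmf (poisson b) (m - i) else 0) * pmf (poisson a) i)"
    unfolding pmf_bind shifted by (rule integral_measure_pmf_real) (auto split: if_splits)
  also have "\<dots> = (\<Sum>i\<le>m. b ^ (m - i) / fact (m - i) * exp (- b) * (a ^ i / fact i * exp (- a)))"
    using assms by (simp add: pmf_poisson_nonneg)
  also have "\<dots> = pmf (poisson (a + b)) m"
    by (subst poisson_pmf_convolution) (simp add: pmf_poisson_nonneg assms)
  finally show "pmf (bind_pmf (poisson a) (\<lambda>i. map_pmf ((+) i) (poisson b))) m = pmf (poisson (a + b)) m" .
qed

lemma integrable_measure_pmf_bounded:
  fixes f :: "'a \<Rightarrow> real"
  assumes "\<And>x. \<bar>f x\<bar> \<le> B"
  shows "integrable (measure_pmf M) f"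
  by (rule measure_pmf.integrable_const_bound[where B=B]) (use assms in auto)

lemma integrable_measure_pmf_nat:
  fixes f :: "nat \<Rightarrow> real"
  assumes "summable (\<lambda>j. \<bar>pmf M j * f j\<bar>)"
  shows "integrable (measure_pmf M) f"
    and "measure_pmf.expectation M f = (\<Sum>j. pmf M j * f j)"
proof -
  have abs_summable: "Infinite_Set_Sum.abs_summable_on (\<lambda>j. pmf M j * f j) UNIV"
    using assms by (simp add: abs_summable_on_nat_iff')
  then show "integrable (measure_pmf M) f"
    unfolding Infinite_Set_Sum.abs_summable_on_def measure_pmf_eq_density by (subst integrable_density) auto
  show "measure_pmf.expectation M f = (\<Sum>j. pmf M j * f j)"
    using abs_summable by (simp add: pmf_expectation_eq_infsetsum infsetsum_nat')
qed

lemma poisson_mean: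
  assumes "0 \<le> r"
  shows "integrable (measure_pmf (poisson r)) real"
    and "measure_pmf.expectation (poisson r) real = r"
proof -
  have "(\<lambda>m. r * (r ^ m / fact m)) sums (r * exp r)"
    using exp_converges[of r] by (intro sums_mult) (simp add: divide_inverse mult_ac)
  moreover have "real (Suc m) * (r ^ Suc m / fact (Suc m)) = r * (r ^ m / fact m)" for m
    by (simp add: field_simps del: of_nat_Suc)
  ultimately have "(\<lambda>m. real (Suc m) * (r ^ Suc m / fact (Suc m))) sums (r * exp r)"
    by simp
  then have "(\<lambda>j. real j * (r ^ j / fact j)) sums (r * exp r)"
    by (subst (asm) sums_Suc_iff) simp
  from sums_mult2[OF this, of "exp (- r)"]
  have mean: "(\<lambda>j. pmf (poisson r) j * real j) sums r"
    using assms by (simp add: pmf_poisson_nonneg mult_ac exp_minus_inverse)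
  then have "summable (\<lambda>j. \<bar>pmf (poisson r) j * real j\<bar>)"
    by (simp add: sums_summable)
  note series = integrable_measure_pmf_nat[OF this]
  show "integrable (measure_pmf (poisson r)) real" by (rule series(1))
  show "measure_pmf.expectation (poisson r) real = r"
    using series(2) mean by (simp add: sums_iff)
qed

definition poisson_shift :: "real \<Rightarrow> (nat \<Rightarrow> real) \<Rightarrow> nat \<Rightarrow> real" where
  "poisson_shift r \<phi> y = measure_pmf.expectation (poisson r) (\<lambda>j. \<phi> (y + j))"

lemma poisson_shift_zero [simp]: "poisson_shift 0 \<phi> y = \<phi> y"
  by (simp add: poisson_shift_def poisson_def)

lemma abs_poisson_shift_le:
  assumes "\<And>j. \<bar>\<phi> j\<bar> \<le> B"
  shows "\<bar>poisson_shift r \<phi> y\<bar> \<le> B"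
proof -
  have "\<bar>poisson_shift r \<phi> y\<bar> \<le> measure_pmf.expectation (poisson r) (\<lambda>j. \<bar>\<phi> (y + j)\<bar>)"
    unfolding poisson_shift_def using integral_norm_bound[of "measure_pmf (poisson r)" "\<lambda>j. \<phi> (y + j)"]
    by simp
  also have "\<dots> \<le> B"
    by (rule measure_pmf.integral_le_const)
       (auto intro!: integrable_measure_pmf_bounded[where B=B] simp: assms)
  finally show ?thesis .
qed

lemma poisson_shift_mono:
  assumes "\<And>j. \<bar>\<phi> j\<bar> \<le> B" "\<And>j. \<bar>\<psi> j\<bar> \<le> B" "\<And>j. \<phi> j \<le> \<psi> j"
  shows "poisson_shift r \<phi> y \<le> poisson_shift r \<psi> y"
  unfolding poisson_shift_def
  by (rule integral_mono) (auto intro!: integrable_measure_pmf_bounded[where B=B] simp: assms)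

lemma poisson_shift_add:
  assumes B: "\<And>j. \<bar>\<phi> j\<bar> \<le> B" and "0 \<le> a" "0 \<le> b"
  shows "poisson_shift a (poisson_shift b \<phi>) y = poisson_shift (a + b) \<phi> y"
proof -
  have "poisson_shift (a + b) \<phi> y
      = measure_pmf.expectation (bind_pmf (poisson a) (\<lambda>i. map_pmf ((+) i) (poisson b))) (\<lambda>j. \<phi> (y + j))"
    unfolding poisson_shift_def poisson_add[OF assms(2,3)] ..
  also have "\<dots> = (\<integral>i. measure_pmf.expectation (map_pmf ((+) i) (poisson b)) (\<lambda>j. \<phi> (y + j)) \<partial>measure_pmf (poisson a))"
    unfolding measure_pmf_bind
    by (rule integral_bind[where K="count_space UNIV" and B=B and B'=1])
       (auto simp: B measure_pmf.prob_space_axioms prob_space_imp_subprob_space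
          measure_pmf_in_subprob_algebra prob_space.finite_measure[OF measure_pmf.prob_space_axioms])
  also have "\<dots> = poisson_shift a (poisson_shift b \<phi>) y"
    unfolding poisson_shift_def by (simp add: add.assoc)
  finally show ?thesis ..
qed

definition discrete_concave :: "(nat \<Rightarrow> real) \<Rightarrow> bool" where
  "discrete_concave \<phi> \<longleftrightarrow> (\<forall>j. \<phi> (j + 2) - \<phi> (j + 1) \<le> \<phi> (j + 1) - \<phi> j)"

lemma discrete_concave_le_secant:
  assumes "discrete_concave \<phi>"
  shows "\<phi> (y + j) \<le> \<phi> y + real j * (\<phi> (y + 1) - \<phi> y)"
proof -
  have increments: "\<phi> (y + i + 1) - \<phi> (y + i) \<le> \<phi> (y + 1) - \<phi> y" for i
  proof (induction i)
    case (Suc i)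
    then show ?case using assms[unfolded discrete_concave_def, rule_format, of "y + i"] by simp
  qed simp
  show ?thesis
  proof (induction j)
    case (Suc j)
    then show ?case using increments[of j] by (simp add: algebra_simps)
  qed simp
qed

text \<open>The secant bound is linear in j, and Pois(q) has mean q.\<close>

lemma poisson_shift_le_linear:
  assumes "discrete_concave \<phi>" and B: "\<And>j. \<bar>\<phi> j\<bar> \<le> B" and "0 \<le> q"
  shows "poisson_shift q \<phi> y \<le> (1 - q) * \<phi> y + q * \<phi> (y + 1)"
proof -
  note mean = poisson_mean[OF \<open>0 \<le> q\<close>]
  have "poisson_shift q \<phi> y \<le> measure_pmf.expectation (poisson q) (\<lambda>j. \<phi> y + real j * (\<phi> (y + 1) - \<phi> y))"
    unfolding poisson_shift_def
  proof (rule integral_mono)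
    show "integrable (measure_pmf (poisson q)) (\<lambda>j. \<phi> (y + j))"
      by (rule integrable_measure_pmf_bounded[where B=B]) (simp add: B)
    show "integrable (measure_pmf (poisson q)) (\<lambda>j. \<phi> y + real j * (\<phi> (y + 1) - \<phi> y))"
      using mean(1) by simp
  qed (rule discrete_concave_le_secant[OF assms(1)])
  also have "\<dots> = \<phi> y + q * (\<phi> (y + 1) - \<phi> y)"
    using mean by (simp add: Bochner_Integration.integral_add integrable_measure_pmf_bounded)
  finally show ?thesis by (simp add: algebra_simps)
qed

lemma discrete_concave_mix:
  assumes "discrete_concave \<phi>" "0 \<le> q" "q \<le> 1"
  shows "discrete_concave (\<lambda>j. (1 - q) * \<phi> j + q * \<phi> (j + 1))"
  unfolding discrete_concave_def
proof
  fix j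
  have "(1 - q) * (\<phi> (j + 2) - \<phi> (j + 1)) \<le> (1 - q) * (\<phi> (j + 1) - \<phi> j)"
    "q * (\<phi> (j + 1 + 2) - \<phi> (j + 1 + 1)) \<le> q * (\<phi> (j + 1 + 1) - \<phi> (j + 1))"
    using assms unfolding discrete_concave_def by (auto intro: mult_left_mono)
  then show "(1 - q) * \<phi> (j + 2) + q * \<phi> (j + 2 + 1) - ((1 - q) * \<phi> (j + 1) + q * \<phi> (j + 1 + 1))
      \<le> (1 - q) * \<phi> (j + 1) + q * \<phi> (j + 1 + 1) - ((1 - q) * \<phi> j + q * \<phi> (j + 1))"
    by (simp add: algebra_simps numeral_2_eq_2)
qed

lemma abs_mix_le:
  fixes \<phi> :: "nat \<Rightarrow> real"
  assumes "\<And>j. \<bar>\<phi> j\<bar> \<le> B" "0 \<le> q" "q \<le> 1"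
  shows "\<bar>(1 - q) * \<phi> j + q * \<phi> (j + 1)\<bar> \<le> B"
proof -
  have "\<bar>(1 - q) * \<phi> j + q * \<phi> (j + 1)\<bar> \<le> (1 - q) * \<bar>\<phi> j\<bar> + q * \<bar>\<phi> (j + 1)\<bar>"
    using assms(2,3) by (simp add: abs_mult order_trans[OF abs_triangle_ineq])
  also have "\<dots> \<le> (1 - q) * B + q * B"
    using assms by (intro add_mono mult_left_mono) auto
  finally show ?thesis by (simp add: algebra_simps)
qed

text \<open>A Bernoulli sum dominates a Poisson variable of the same mean in concave order: adding
  one Bernoulli variable at a time, each step replaces a Poisson summand by a Bernoulli one,
  which by Jensen can only increase the expectation of a concave function.\<close>

lemma poisson_shift_le_subset_expectation:
  assumes "finite I" "\<forall>i\<in>I. 0 \<le> q i \<and> q i \<le> 1"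
    and "discrete_concave \<phi>" "\<And>j. \<bar>\<phi> j\<bar> \<le> B"
  shows "poisson_shift (\<Sum>i\<in>I. q i) \<phi> 0 \<le> subset_expectation I q (\<lambda>A. \<phi> (card A))"
  using assms
proof (induction I arbitrary: \<phi> rule: finite_induct)
  case (insert a I)
  have qa: "0 \<le> q a" "q a \<le> 1" using insert.prems by auto
  define \<psi> where "\<psi> j = (1 - q a) * \<phi> j + q a * \<phi> (j + 1)" for j
  have \<psi>_bound: "\<bar>\<psi> j\<bar> \<le> B" for j
    unfolding \<psi>_def by (rule abs_mix_le[OF insert.prems(3) qa])
  have "discrete_concave \<psi>"
    unfolding \<psi>_def[abs_def] by (rule discrete_concave_mix[OF insert.prems(2) qa])
  then have IH: "poisson_shift (\<Sum>i\<in>I. q i) \<psi> 0 \<le> subset_expectation I q (\<lambda>A. \<psi> (card A))"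
    using insert.IH \<psi>_bound insert.prems(1) by simp
  have "0 \<le> (\<Sum>i\<in>I. q i)" using insert.prems(1) by (intro sum_nonneg) auto
  then have "poisson_shift (\<Sum>i\<in>insert a I. q i) \<phi> 0 = poisson_shift (\<Sum>i\<in>I. q i) (poisson_shift (q a) \<phi>) 0"
    using insert.hyps poisson_shift_add[OF insert.prems(3) _ qa(1)] by (simp add: add.commute)
  also have "\<dots> \<le> poisson_shift (\<Sum>i\<in>I. q i) \<psi> 0"
    by (rule poisson_shift_mono[where B=B])
       (use abs_poisson_shift_le insert.prems(3) \<psi>_bound
          poisson_shift_le_linear[OF insert.prems(2,3) qa(1)] in \<open>auto simp: \<psi>_def\<close>)
  also note IH
  also have "subset_expectation I q (\<lambda>A. \<psi> (card A))
      = subset_expectation (insert a I) q (\<lambda>A. \<phi> (card A))"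
    unfolding subset_expectation_insert[OF insert.hyps]
  proof (rule subset_expectation_cong)
    fix A assume "A \<subseteq> I"
    then have "finite A" "a \<notin> A" using insert.hyps finite_subset by auto
    then show "\<psi> (card A) = (1 - q a) * \<phi> (card A) + q a * \<phi> (card (insert a A))"
      by (simp add: \<psi>_def)
  qed
  finally show ?case .
qed simp

lemma pois_min_mean_eq_expectation:
  assumes "0 \<le> r"
  shows "pois_min_mean r k = poisson_shift r (\<lambda>j. real (min j k)) 0"
proof -
  have "summable (\<lambda>j. r ^ j / fact j * exp (- r))"
    using exp_converges[of r] by (intro summable_mult2) (simp add: sums_summable divide_inverse mult_ac)
  then have "summable (\<lambda>j. real k * pmf (poisson r) j)"
    using assms by (intro summable_mult) (simp add: pmf_poisson_nonneg)
  then have "summable (\<lambda>j. \<bar>pmf (poisson r) j * real (min j k)\<bar>)"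
    by (rule summable_comparison_test'[of _ 0]) (simp add: mult.commute mult_right_mono)
  from integrable_measure_pmf_nat(2)[OF this] show ?thesis
    unfolding poisson_shift_def pois_min_mean_def using assms by (simp add: pmf_poisson_nonneg mult.commute)
qed

lemma pois_min_mean_le_subset_expectation:
  assumes "finite I" "\<forall>i\<in>I. 0 \<le> q i \<and> q i \<le> 1"
  shows "pois_min_mean (\<Sum>i\<in>I. q i) k \<le> subset_expectation I q (\<lambda>A. real (min (card A) k))"
proof -
  have "discrete_concave (\<lambda>j. real (min j k))"
    by (simp add: discrete_concave_def min_def)
  moreover have "0 \<le> (\<Sum>i\<in>I. q i)" using assms(2) by (intro sum_nonneg) auto
  ultimately show ?thesis
    using poisson_shift_le_subset_expectation[OF assms, of "\<lambda>j. real (min j k)" "real k"]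
    by (simp add: pois_min_mean_eq_expectation)
qed

section \<open>The truncated Poisson mean\<close>

lemma sum_lessThan_indicator_less: "(\<Sum>m<k. if m < j then c else 0) = real (min j k) * (c :: real)"
proof (induction k)
  case (Suc k)
  show ?case
  proof (cases "k < j")
    case True
    then have "min j (Suc k) = Suc (min j k)" by auto
    then show ?thesis using Suc True by (simp add: algebra_simps)
  qed (use Suc in \<open>simp add: min_def\<close>)
qed simp

lemma sum_zero_power_div_fact: "(\<Sum>j\<le>m. (0::real) ^ j / fact j) = 1"
  by (induction m) auto

text \<open>The tail-sum formula E min(X, k) = (\<Sum>m<k. P(X > m)).\<close>

lemma pois_min_mean_closed_form:
  "pois_min_mean x k = (\<Sum>m<k. 1 - exp (- x) * (\<Sum>j\<le>m. x ^ j / fact j))"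
proof -
  define w where "w j = x ^ j / fact j * exp (- x)" for j
  have "(\<lambda>j. x ^ j / fact j * exp (- x)) sums (exp x * exp (- x))"
    using exp_converges[of x] by (intro sums_mult2) (simp add: divide_inverse mult_ac)
  then have total: "w sums 1"
    unfolding w_def[abs_def] by (simp add: exp_minus_inverse)
  have head: "(\<lambda>j. if j \<le> m then w j else 0) sums (exp (- x) * (\<Sum>j\<le>m. x ^ j / fact j))" for m
    using sums_finite[of "{..m}" "\<lambda>j. if j \<le> m then w j else 0"]
    by (simp add: w_def sum_distrib_left mult_ac)
  have tail: "(\<lambda>j. if m < j then w j else 0) sums (1 - exp (- x) * (\<Sum>j\<le>m. x ^ j / fact j))" for m
  proof -
    have "(\<lambda>j. w j - (if j \<le> m then w j else 0)) = (\<lambda>j. if m < j then w j else 0)"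
      by auto
    then show ?thesis using sums_diff[OF total head[of m]] by simp
  qed
  have "(\<lambda>j. \<Sum>m<k. if m < j then w j else 0) sums (\<Sum>m<k. 1 - exp (- x) * (\<Sum>j\<le>m. x ^ j / fact j))"
    by (rule sums_sum) (rule tail)
  then have "(\<lambda>j. real (min j k) * w j) sums (\<Sum>m<k. 1 - exp (- x) * (\<Sum>j\<le>m. x ^ j / fact j))"
    by (simp only: sum_lessThan_indicator_less)
  then show ?thesis unfolding pois_min_mean_def w_def by (simp add: sums_iff)
qed

lemma pois_min_mean_zero [simp]: "pois_min_mean 0 k = 0"
  by (simp add: pois_min_mean_closed_form sum_zero_power_div_fact)

lemma continuous_on_pois_min_mean: "continuous_on S (\<lambda>x. pois_min_mean x k)"
  unfolding pois_min_mean_closed_form by (intro continuous_intros) auto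

lemma has_real_derivative_exp_partial_sum:
  "((\<lambda>x. exp (- x) * (\<Sum>j\<le>m. x ^ j / fact j)) has_real_derivative - exp (- x) * x ^ m / fact m) (at x)"
proof -
  have "((\<lambda>x. \<Sum>j\<le>m. x ^ j / fact j) has_real_derivative (\<Sum>j\<le>m. x ^ j / fact j) - x ^ m / fact m) (at x)"
  proof (induction m)
    case 0
    show ?case by (simp add: DERIV_const)
  next
    case (Suc m)
    have "real (Suc m) * x ^ m / fact (Suc m) = x ^ m / fact m"
      by (simp add: field_simps del: of_nat_Suc)
    then have "((\<lambda>x. x ^ Suc m / fact (Suc m)) has_real_derivative x ^ m / fact m) (at x)"
      using DERIV_cdivide[OF DERIV_pow[of "Suc m" x], of "fact (Suc m)"] by simp
    from DERIV_add[OF Suc this] show ?case by simp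
  qed
  from DERIV_mult[OF DERIV_exp[THEN DERIV_chain2, OF DERIV_minus[OF DERIV_ident]] this]
  show ?thesis by (simp add: algebra_simps)
qed

lemma pois_min_mean_has_real_derivative:
  "((\<lambda>x. pois_min_mean x k) has_real_derivative exp (- x) * (\<Sum>m<k. x ^ m / fact m)) (at x)"
proof -
  have "((\<lambda>x. \<Sum>m<k. 1 - exp (- x) * (\<Sum>j\<le>m. x ^ j / fact j)) has_real_derivative
          (\<Sum>m<k. 0 - (- exp (- x) * x ^ m / fact m))) (at x)"
    by (intro DERIV_sum DERIV_diff DERIV_const has_real_derivative_exp_partial_sum)
  then show ?thesis unfolding pois_min_mean_closed_form by (simp add: sum_distrib_left)
qed

lemma exp_partial_sum_antimono:
  fixes a b :: real
  assumes "0 \<le> a" "a \<le> b"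
  shows "exp (- b) * (\<Sum>m<k. b ^ m / fact m) \<le> exp (- a) * (\<Sum>m<k. a ^ m / fact m)"
proof (cases k)
  case (Suc K)
  have "exp (- b) * (\<Sum>m\<le>K. b ^ m / fact m) \<le> exp (- a) * (\<Sum>m\<le>K. a ^ m / fact m)"
    by (rule deriv_nonpos_imp_antimono[where g="\<lambda>x. exp (- x) * (\<Sum>m\<le>K. x ^ m / fact m)"],
        rule has_real_derivative_exp_partial_sum) (use assms in auto)
  then show ?thesis by (simp add: Suc lessThan_Suc_atMost)
qed simp

lemma pois_min_mean_mono:
  assumes "0 \<le> a" "a \<le> b"
  shows "pois_min_mean a k \<le> pois_min_mean b k"
  by (rule deriv_nonneg_imp_mono[OF pois_min_mean_has_real_derivative])
     (use assms in \<open>auto intro!: mult_nonneg_nonneg sum_nonneg\<close>)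

lemma pois_min_mean_le:
  assumes "0 \<le> x"
  shows "pois_min_mean x k \<le> x"
proof -
  have "exp (- t) * (\<Sum>m<k. t ^ m / fact m) \<le> 1" if "0 \<le> t" for t :: real
  proof -
    have "exp (- t) * (\<Sum>m<k. t ^ m / fact m) \<le> exp (- 0) * (\<Sum>m<k. 0 ^ m / fact m)"
      by (intro exp_partial_sum_antimono order.refl that)
    moreover have "(\<Sum>m<k. (0::real) ^ m / fact m) \<le> 1"
      by (cases k) (auto simp: lessThan_Suc_atMost sum_zero_power_div_fact)
    ultimately show ?thesis by simp
  qed
  then have "0 - pois_min_mean 0 k \<le> x - pois_min_mean x k"
    by (intro deriv_nonneg_imp_mono[where g="\<lambda>x. x - pois_min_mean x k"
          and g'="\<lambda>t. 1 - exp (- t) * (\<Sum>m<k. t ^ m / fact m)"]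
          DERIV_diff DERIV_ident pois_min_mean_has_real_derivative)
       (use assms in auto)
  then show ?thesis by simp
qed

lemma concave_on_pois_min_mean: "concave_on {0..} (\<lambda>x. pois_min_mean x k)"
  unfolding concave_on_def
  by (rule convex_on_realI[where f'="\<lambda>x. - (exp (- x) * (\<Sum>m<k. x ^ m / fact m))"])
     (auto intro!: DERIV_minus pois_min_mean_has_real_derivative exp_partial_sum_antimono)

lemma pois_min_mean_scale:
  assumes "0 \<le> x" "0 \<le> t" "t \<le> 1"
  shows "t * pois_min_mean x k \<le> pois_min_mean (t * x) k"
  using concave_onD[OF concave_on_pois_min_mean, of t 0 x] assms by simp

section \<open>Rewards of independent offers\<close>

lemma expectation_indep_offer:
  assumes y: "\<forall>i<n. 0 \<le> y i \<and> y i \<le> 1"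
  shows "measure_pmf.expectation (indep_offer n y) F = subset_expectation {0..<n} y F"
proof -
  define I where "I = {0..<n}"
  define M where "M = Pi_pmf I False (\<lambda>i. bernoulli_pmf (y i))"
  define set_of where "set_of f = {i\<in>I. f i}" for f :: "nat \<Rightarrow> bool"
  define indicator_of where "indicator_of S = (\<lambda>i. i \<in> S)" for S :: "nat set"
  have fin: "finite I" by (simp add: I_def)
  have pmf_M: "pmf M (indicator_of S) = (\<Prod>i\<in>S. y i) * (\<Prod>i\<in>I - S. 1 - y i)" if "S \<subseteq> I" for S
  proof -
    have "pmf M (indicator_of S) = (\<Prod>i\<in>I. if i \<in> S then y i else 1 - y i)"
      unfolding M_def using that fin y by (subst pmf_Pi) (auto simp: indicator_of_def I_def intro!: prod.cong)
    also have "\<dots> = (\<Prod>i\<in>S. y i) * (\<Prod>i\<in>I - S. 1 - y i)"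
      using fin that by (subst prod.If_cases) (auto intro!: arg_cong2[where f="(*)"] prod.cong)
    finally show ?thesis .
  qed
  have "measure_pmf.expectation (indep_offer n y) F = measure_pmf.expectation M (\<lambda>f. F (set_of f))"
    by (simp add: indep_offer_def M_def set_of_def I_def)
  also have "\<dots> = (\<Sum>f\<in>indicator_of ` Pow I. F (set_of f) * pmf M f)"
  proof (rule integral_measure_pmf_real)
    show "finite (indicator_of ` Pow I)" using fin by simp
    fix f assume "f \<in> set_pmf M"
    then have "\<forall>x. x \<notin> I \<longrightarrow> f x = False"
      using set_Pi_pmf_subset[OF fin, of False "\<lambda>i. bernoulli_pmf (y i)"] unfolding M_def by auto
    then have "f = indicator_of (set_of f)" unfolding indicator_of_def set_of_def by auto
    then show "f \<in> indicator_of ` Pow I" by (auto simp: set_of_def)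
  qed
  also have "\<dots> = (\<Sum>S\<in>Pow I. F (set_of (indicator_of S)) * pmf M (indicator_of S))"
    by (rule sum.reindex_cong[where l=indicator_of])
       (auto simp: inj_on_def indicator_of_def fun_eq_iff)
  also have "\<dots> = subset_expectation I y F"
    unfolding subset_expectation_def
  proof (intro sum.cong refl)
    fix S assume "S \<in> Pow I"
    moreover have "set_of (indicator_of S) = S" using \<open>S \<in> Pow I\<close> by (auto simp: set_of_def indicator_of_def)
    ultimately show "F (set_of (indicator_of S)) * pmf M (indicator_of S)
        = (\<Prod>i\<in>S. y i) * (\<Prod>i\<in>I - S. 1 - y i) * F S"
      by (simp add: pmf_M)
  qed
  finally show ?thesis by (simp add: I_def)
qed

lemma det_reward_eq_subset_expectation: "det_reward k p v S = subset_expectation S p (reward k v)"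
  by (simp add: det_reward_def subset_expectation_def)

lemma policy_reward_indep_offer:
  assumes "\<forall>i<n. 0 \<le> y i \<and> y i \<le> 1"
  shows "policy_reward k p v (indep_offer n y) = subset_expectation {0..<n} y (det_reward k p v)"
  unfolding policy_reward_def by (rule expectation_indep_offer[OF assms])

lemma subset_expectation_reward:
  assumes "finite I"
  shows "subset_expectation I q (reward k v)
       = (\<Sum>i\<in>I. (v i - 1) * q i) + subset_expectation I q (\<lambda>A. real (min (card A) k))"
proof -
  have "subset_expectation I q (reward k v)
      = subset_expectation I q (\<lambda>A. (\<Sum>i\<in>A. v i - 1) + real (min (card A) k))"
  proof (rule subset_expectation_cong)
    fix A assume "A \<subseteq> I"
    then have "finite A" using assms finite_subset by auto
    then show "reward k v A = (\<Sum>i\<in>A. v i - 1) + real (min (card A) k)"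
      by (simp add: reward_def sum_subtractf max_def min_def)
  qed
  then show ?thesis by (simp add: subset_expectation_add subset_expectation_sum[OF assms])
qed

lemma policy_reward_indep_offer_split:
  assumes "\<forall>i<n. 0 \<le> y i \<and> y i \<le> 1"
  shows "policy_reward k p v (indep_offer n y)
       = (\<Sum>i<n. (v i - 1) * (y i * p i))
         + subset_expectation {0..<n} (\<lambda>i. y i * p i) (\<lambda>A. real (min (card A) k))"
  by (simp add: policy_reward_indep_offer[OF assms] det_reward_eq_subset_expectation[abs_def]
      subset_expectation_compose subset_expectation_reward atLeast0LessThan)

lemma subset_expectation_min_card_le:
  assumes "finite I" "\<forall>i\<in>I. 0 \<le> q i \<and> q i \<le> 1"
  shows "subset_expectation I q (\<lambda>A. real (min (card A) k)) \<le> min (\<Sum>i\<in>I. q i) (real k)"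
proof -
  have "subset_expectation I q (\<lambda>A. real (min (card A) k)) \<le> subset_expectation I q (\<lambda>A. \<Sum>i\<in>A. 1)"
    by (rule subset_expectation_mono[OF assms(2)]) auto
  moreover have "subset_expectation I q (\<lambda>A. real (min (card A) k)) \<le> subset_expectation I q (\<lambda>A. real k)"
    by (rule subset_expectation_mono[OF assms(2)]) auto
  ultimately show ?thesis
    using subset_expectation_sum[OF assms(1), of q "\<lambda>i. 1"] subset_expectation_const[OF assms(1)] by simp
qed

section \<open>Prefix vectors\<close>

definition prefix_vec :: "nat \<Rightarrow> real \<Rightarrow> nat \<Rightarrow> real" where
  "prefix_vec j \<theta> i = (if i < j then 1 else if i = j then \<theta> else 0)"

lemma prefix_form_iff: "prefix_form n y \<longleftrightarrow> (\<exists>j \<theta>. 0 \<le> \<theta> \<and> \<theta> \<le> 1 \<and> (\<forall>i<n. y i = prefix_vec j \<theta> i))"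
  by (simp add: prefix_form_def prefix_vec_def)

lemma prefix_form_bounds: "prefix_form n y \<Longrightarrow> \<forall>i<n. 0 \<le> y i \<and> y i \<le> 1"
  unfolding prefix_form_def by fastforce

lemma prefix_vec_mass_exists:
  assumes "\<forall>i<n. 0 \<le> p i" "0 \<le> m" "m \<le> (\<Sum>i<n. p i)"
  shows "\<exists>j \<theta>. 0 \<le> \<theta> \<and> \<theta> \<le> 1 \<and> (j < n \<or> (j = n \<and> \<theta> = 0)) \<and> (\<Sum>i<n. prefix_vec j \<theta> i * p i) = m"
  using assms
proof (induction n arbitrary: m)
  case 0
  then show ?case by (intro exI[of _ 0] exI[of _ 0]) auto
next
  case (Suc n)
  show ?case
  proof (cases "m \<le> (\<Sum>i<n. p i)")
    case True
    then obtain j \<theta> where j: "0 \<le> \<theta>" "\<theta> \<le> 1" "j < n \<or> (j = n \<and> \<theta> = 0)"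
      "(\<Sum>i<n. prefix_vec j \<theta> i * p i) = m"
      using Suc.IH[of m] Suc.prems by auto
    then have "prefix_vec j \<theta> n = 0" by (auto simp: prefix_vec_def)
    then show ?thesis using j by (intro exI[of _ j] exI[of _ \<theta>]) auto
  next
    case False
    then have pn: "0 < p n" using Suc.prems by simp
    define \<theta> where "\<theta> = (m - (\<Sum>i<n. p i)) / p n"
    have "0 \<le> \<theta>" "\<theta> \<le> 1" using False Suc.prems pn by (auto simp: \<theta>_def field_simps)
    moreover have "(\<Sum>i<Suc n. prefix_vec n \<theta> i * p i) = m"
      using pn by (simp add: prefix_vec_def \<theta>_def)
    ultimately show ?thesis by (intro exI[of _ n] exI[of _ \<theta>]) auto
  qed
qed

lemma prefix_form_mass_exists:
  assumes "\<forall>i<n. 0 \<le> p i" "0 \<le> m" "m \<le> (\<Sum>i<n. p i)"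
  obtains y where "prefix_form n y" "(\<Sum>i<n. y i * p i) = m"
  using prefix_vec_mass_exists[OF assms] unfolding prefix_form_iff by blast

text \<open>Moving mass towards smaller indices can only increase a weighted sum with decreasing
  weights: compare both sides against the weight u r at the fractional position r.\<close>

lemma prefix_form_weighted_sum_ge:
  assumes "prefix_form n y'" and y: "\<forall>i<n. 0 \<le> y i \<and> y i \<le> 1"
    and p: "\<forall>i<n. 0 \<le> p i" and u: "\<forall>i j. i \<le> j \<and> j < n \<longrightarrow> u j \<le> u i"
    and s: "0 \<le> s" "s \<le> 1" and mass: "(\<Sum>i<n. y' i * p i) = s * (\<Sum>i<n. y i * p i)"
  shows "s * (\<Sum>i<n. u i * (y i * p i)) \<le> (\<Sum>i<n. u i * (y' i * p i))"
proof (cases "n = 0")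
  case False
  obtain j \<theta> where y': "\<forall>i<n. y' i = prefix_vec j \<theta> i"
    using assms(1) unfolding prefix_form_iff by blast
  define r where "r = min j (n - 1)"
  define d where "d i = y' i * p i - s * (y i * p i)" for i
  have "r < n" using False by (simp add: r_def)
  have "(\<Sum>i<n. d i) = 0" using mass by (simp add: d_def sum_subtractf sum_distrib_left)
  have "(\<Sum>i<n. u i * (y' i * p i)) - s * (\<Sum>i<n. u i * (y i * p i)) = (\<Sum>i<n. u i * d i)"
    by (simp add: d_def sum_subtractf sum_distrib_left algebra_simps)
  also have "\<dots> = (\<Sum>i<n. (u i - u r) * d i) + u r * (\<Sum>i<n. d i)"
    by (simp add: sum_distrib_left sum_subtractf algebra_simps)
  also have "\<dots> = (\<Sum>i<n. (u i - u r) * d i)"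
    using \<open>(\<Sum>i<n. d i) = 0\<close> by simp
  also have "\<dots> \<ge> 0"
  proof (rule sum_nonneg)
    fix i assume "i \<in> {..<n}"
    then have i: "i < n" "0 \<le> p i" "0 \<le> y i" "y i \<le> 1" using p y by auto
    consider "i < r" | "i = r" | "r < i" by linarith
    then show "0 \<le> (u i - u r) * d i"
    proof cases
      case 1
      then have "d i = p i * (1 - s * y i)"
        using y' i by (simp add: d_def prefix_vec_def r_def algebra_simps)
      moreover have "s * y i \<le> 1" using i s by (simp add: mult_le_one)
      moreover have "u r \<le> u i" using u 1 \<open>r < n\<close> by auto
      ultimately show ?thesis using i by simp
    next
      case 3
      then have "d i = - (s * (y i * p i))"
        using y' i by (auto simp: d_def prefix_vec_def r_def)
      moreover have "u i \<le> u r" using u 3 i by auto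
      ultimately show ?thesis using i s by (intro mult_nonpos_nonpos) auto
    qed simp
  qed
  finally show ?thesis by simp
qed simp

lemma subset_expectation_prefix_le:
  assumes "prefix_form n y"
  shows "\<exists>m\<le>n. subset_expectation {0..<n} y D \<le> D {0..<m}"
proof -
  obtain j \<theta> where \<theta>: "0 \<le> \<theta>" "\<theta> \<le> 1" and y: "\<forall>i<n. y i = prefix_vec j \<theta> i"
    using assms unfolding prefix_form_iff by blast
  show ?thesis
  proof (cases "j < n")
    case False
    then have "subset_expectation {0..<n} y D = D {0..<n}"
      using y by (intro subset_expectation_ones) (auto simp: prefix_vec_def)
    then show ?thesis by auto
  next
    case True
    have "subset_expectation {0..<n} y D = subset_expectation {0..<Suc j} y D"
      using True y by (intro subset_expectation_zero_tail) (auto simp: prefix_vec_def)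
    also have "\<dots> = subset_expectation {0..<j} y (\<lambda>A. (1 - \<theta>) * D A + \<theta> * D (insert j A))"
      using True y by (simp add: atLeast0_lessThan_Suc subset_expectation_insert prefix_vec_def)
    also have "\<dots> = (1 - \<theta>) * D {0..<j} + \<theta> * D {0..<Suc j}"
      using True y by (subst subset_expectation_ones) (auto simp: prefix_vec_def atLeast0_lessThan_Suc)
    also have "\<dots> \<le> max (D {0..<j}) (D {0..<Suc j})"
      using \<theta> by (intro convex_bound_le) auto
    finally show ?thesis
      using True unfolding le_max_iff_disj by (meson Suc_leI less_imp_le_nat)
  qed
qed

section \<open>The LP relaxation\<close>

definition LP_feasible :: "nat \<Rightarrow> nat \<Rightarrow> (nat \<Rightarrow> real) \<Rightarrow> (nat \<Rightarrow> real) \<Rightarrow> real \<Rightarrow> bool" where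
  "LP_feasible n k p y z \<longleftrightarrow>
     (\<forall>i<n. 0 \<le> y i \<and> y i \<le> 1) \<and> z \<le> real k - (\<Sum>i<n. p i * y i) \<and> z \<le> 0"

lemma LP_sim_eq: "LP_sim n k p v = Sup {(\<Sum>i<n. v i * p i * y i) + z | y z. LP_feasible n k p y z}"
  by (simp add: LP_sim_def LP_feasible_def)

lemma LP_values_bdd_above:
  assumes "\<forall>i<n. 0 \<le> p i"
  shows "bdd_above {(\<Sum>i<n. v i * p i * y i) + z | y z. LP_feasible n k p y z}"
proof (rule bdd_aboveI[where M="\<Sum>i<n. \<bar>v i\<bar> * p i"])
  fix x assume "x \<in> {(\<Sum>i<n. v i * p i * y i) + z | y z. LP_feasible n k p y z}"
  then obtain y z where x: "x = (\<Sum>i<n. v i * p i * y i) + z" and f: "LP_feasible n k p y z" by auto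
  have "(\<Sum>i<n. v i * p i * y i) \<le> (\<Sum>i<n. \<bar>v i\<bar> * p i)"
  proof (rule sum_mono)
    fix i assume "i \<in> {..<n}"
    then have "0 \<le> p i" "0 \<le> y i" "y i \<le> 1" using assms f by (auto simp: LP_feasible_def)
    then have "v i * p i * y i \<le> \<bar>v i\<bar> * p i * y i" by (intro mult_right_mono) auto
    also have "\<dots> \<le> \<bar>v i\<bar> * p i" using \<open>0 \<le> p i\<close> \<open>y i \<le> 1\<close> by (simp add: mult_left_le)
    finally show "v i * p i * y i \<le> \<bar>v i\<bar> * p i" .
  qed
  then show "x \<le> (\<Sum>i<n. \<bar>v i\<bar> * p i)" using x f by (simp add: LP_feasible_def)
qed

lemma LP_sim_ge:
  assumes "\<forall>i<n. 0 \<le> p i" "LP_feasible n k p y z"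
  shows "(\<Sum>i<n. v i * p i * y i) + z \<le> LP_sim n k p v"
  unfolding LP_sim_eq by (rule cSup_upper[OF _ LP_values_bdd_above[OF assms(1)]]) (use assms in auto)

lemma LP_sim_le:
  assumes "\<And>y z. LP_feasible n k p y z \<Longrightarrow> (\<Sum>i<n. v i * p i * y i) + z \<le> L"
  shows "LP_sim n k p v \<le> L"
  unfolding LP_sim_eq
proof (rule cSup_least)
  have "LP_feasible n k p (\<lambda>_. 0) 0" by (simp add: LP_feasible_def)
  then show "{(\<Sum>i<n. v i * p i * y i) + z | y z. LP_feasible n k p y z} \<noteq> {}" by blast
qed (use assms in auto)

lemma det_reward_le_LP_sim:
  assumes S: "S \<subseteq> {0..<n}" and p: "\<forall>i<n. 0 \<le> p i \<and> p i \<le> 1"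
  shows "det_reward k p v S \<le> LP_sim n k p v"
proof -
  have fin: "finite S" using S finite_subset by auto
  define y where "y i = (if i \<in> S then 1 else 0 :: real)" for i
  have restrict: "(\<Sum>i<n. f i * y i) = (\<Sum>i\<in>S. f i)" for f
  proof -
    have "{..<n} \<inter> S = S" using S by auto
    then show ?thesis by (simp add: y_def sum.inter_restrict[symmetric] if_distrib cong: if_cong)
  qed
  have "det_reward k p v S = (\<Sum>i\<in>S. (v i - 1) * p i) + subset_expectation S p (\<lambda>A. real (min (card A) k))"
    by (simp add: det_reward_eq_subset_expectation subset_expectation_reward[OF fin])
  also have "\<dots> \<le> (\<Sum>i\<in>S. (v i - 1) * p i) + min (\<Sum>i\<in>S. p i) (real k)"
  proof -
    have "\<forall>i\<in>S. 0 \<le> p i \<and> p i \<le> 1" using S p by auto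
    from subset_expectation_min_card_le[OF fin this] show ?thesis by simp
  qed
  also have "\<dots> = (\<Sum>i<n. v i * p i * y i) + min 0 (real k - (\<Sum>i<n. p i * y i))"
    unfolding restrict by (simp add: sum_subtractf algebra_simps min_def)
  also have "\<dots> \<le> LP_sim n k p v"
    by (rule LP_sim_ge) (use p in \<open>auto simp: LP_feasible_def y_def\<close>)
  finally show ?thesis .
qed

lemma OPT_sim_le_LP_sim:
  assumes "\<forall>i<n. 0 \<le> p i \<and> p i \<le> 1"
  shows "OPT_sim n k p v \<le> LP_sim n k p v"
  unfolding OPT_sim_def
proof (rule cSUP_least)
  have "valid_policy n (return_pmf {})" by (simp add: valid_policy_def)
  then show "{\<pi>. valid_policy n \<pi>} \<noteq> {}" by blast
next
  fix \<pi> assume "\<pi> \<in> {\<pi>. valid_policy n \<pi>}"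
  then have sub: "set_pmf \<pi> \<subseteq> Pow {0..<n}" by (auto simp: valid_policy_def)
  then have "finite (set_pmf \<pi>)" by (rule finite_subset) auto
  then show "policy_reward k p v \<pi> \<le> LP_sim n k p v"
    unfolding policy_reward_def
    using sub det_reward_le_LP_sim[OF _ assms]
    by (intro measure_pmf.integral_le_const integrable_measure_pmf_finite)
       (auto simp: AE_measure_pmf_iff)
qed

lemma LP_feasible_le_dual:
  assumes f: "LP_feasible n k p y z" and p: "\<forall>i<n. 0 \<le> p i" and \<beta>: "0 \<le> \<beta>" "\<beta> \<le> 1"
  shows "(\<Sum>i<n. v i * p i * y i) + z \<le> \<beta> * real k + (\<Sum>i<n. p i * max (v i - \<beta>) 0)"
proof -
  have z: "z \<le> real k - (\<Sum>i<n. p i * y i)" "z \<le> 0" using f by (auto simp: LP_feasible_def)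
  have "z = \<beta> * z + (1 - \<beta>) * z" by (simp add: algebra_simps)
  also have "\<dots> \<le> \<beta> * (real k - (\<Sum>i<n. p i * y i))"
    using \<beta> z by (smt (verit) mult_left_mono mult_nonneg_nonpos)
  finally have "(\<Sum>i<n. v i * p i * y i) + z \<le> \<beta> * real k + (\<Sum>i<n. p i * y i * (v i - \<beta>))"
    by (simp add: algebra_simps sum_distrib_left sum_subtractf)
  also have "(\<Sum>i<n. p i * y i * (v i - \<beta>)) \<le> (\<Sum>i<n. p i * max (v i - \<beta>) 0)"
  proof (rule sum_mono)
    fix i assume "i \<in> {..<n}"
    then have "0 \<le> p i" "0 \<le> y i" "y i \<le> 1" using p f by (auto simp: LP_feasible_def)
    then have "p i * y i * (v i - \<beta>) \<le> p i * y i * max (v i - \<beta>) 0"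
      by (intro mult_left_mono) auto
    also have "\<dots> \<le> p i * max (v i - \<beta>) 0"
      using \<open>0 \<le> p i\<close> \<open>y i \<le> 1\<close> by (intro mult_right_mono mult_left_le) auto
    finally show "p i * y i * (v i - \<beta>) \<le> p i * max (v i - \<beta>) 0" .
  qed
  finally show ?thesis by simp
qed

text \<open>With complementary slackness the dual bound is attained by the primal solution y.\<close>

lemma LP_sim_le_complementary:
  assumes p: "\<forall>i<n. 0 \<le> p i" and \<beta>: "0 \<le> \<beta>" "\<beta> \<le> 1"
    and slack: "\<forall>i<n. (\<beta> < v i \<longrightarrow> y i = 1) \<and> (v i < \<beta> \<longrightarrow> y i = 0)"
  shows "LP_sim n k p v \<le> (\<Sum>i<n. v i * (y i * p i)) + \<beta> * (real k - (\<Sum>i<n. y i * p i))"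
proof (rule LP_sim_le)
  fix y' z assume "LP_feasible n k p y' z"
  then have "(\<Sum>i<n. v i * p i * y' i) + z \<le> \<beta> * real k + (\<Sum>i<n. p i * max (v i - \<beta>) 0)"
    using LP_feasible_le_dual p \<beta> by blast
  also have "(\<Sum>i<n. p i * max (v i - \<beta>) 0) = (\<Sum>i<n. (v i - \<beta>) * (y i * p i))"
  proof (rule sum.cong[OF refl])
    fix i assume "i \<in> {..<n}"
    then show "p i * max (v i - \<beta>) 0 = (v i - \<beta>) * (y i * p i)"
      using slack by (cases "\<beta> < v i"; cases "v i < \<beta>") (auto simp: max_def)
  qed
  finally show "(\<Sum>i<n. v i * p i * y' i) + z
      \<le> (\<Sum>i<n. v i * (y i * p i)) + \<beta> * (real k - (\<Sum>i<n. y i * p i))"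
    by (simp add: algebra_simps sum_subtractf sum_distrib_left)
qed

lemma high_mass_eq:
  fixes p v :: "nat \<Rightarrow> real"
  shows "(\<Sum>i\<in>{i. i < n \<and> 1 < v i}. p i) = (\<Sum>i<n. of_bool (1 < v i) * p i)"
proof -
  have "(\<Sum>i<n. of_bool (1 < v i) * p i) = (\<Sum>i<n. if 1 < v i then p i else 0)"
    by (intro sum.cong) auto
  also have "\<dots> = (\<Sum>i\<in>{i \<in> {..<n}. 1 < v i}. p i)"
    by (rule sum.inter_filter[symmetric]) simp
  also have "{i \<in> {..<n}. 1 < v i} = {i. i < n \<and> 1 < v i}" by auto
  finally show ?thesis by simp
qed

lemma LP_sim_le_high_values:
  assumes "\<forall>i<n. 0 \<le> p i"
  shows "LP_sim n k p v
       \<le> (\<Sum>i<n. v i * (of_bool (1 < v i) * p i)) + (real k - (\<Sum>i\<in>{i. i < n \<and> 1 < v i}. p i))"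
  using LP_sim_le_complementary[OF assms, of 1 v "\<lambda>i. of_bool (1 < v i)" k]
  by (simp add: high_mass_eq)

lemma LP_sim_le_all_values:
  assumes "\<forall>i<n. 0 \<le> p i" "\<forall>i<n. 0 \<le> v i"
  shows "LP_sim n k p v \<le> (\<Sum>i<n. v i * (1 * p i))"
  using LP_sim_le_complementary[OF assms(1), of 0 v "\<lambda>_. 1" k] assms(2) by force

text \<open>When the high-value mass is below k, the prefix of mass k ends at a candidate of value at
  most 1, whose value serves as the dual multiplier.\<close>

lemma LP_sim_le_prefix_value:
  assumes p: "\<forall>i<n. 0 \<le> p i" and v0: "\<forall>i<n. 0 \<le> v i"
    and mono: "\<forall>i j. i \<le> j \<and> j < n \<longrightarrow> v j \<le> v i"
    and high: "(\<Sum>i\<in>{i. i < n \<and> 1 < v i}. p i) < real k"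
    and y: "\<forall>i<n. y i = prefix_vec j \<theta> i" and \<theta>: "0 \<le> \<theta>" "\<theta> \<le> 1"
    and mass: "(\<Sum>i<n. y i * p i) = real k" and k: "real k < (\<Sum>i<n. p i)"
  shows "LP_sim n k p v \<le> (\<Sum>i<n. v i * (y i * p i))"
proof -
  have j: "j < n"
  proof (rule ccontr)
    assume "\<not> j < n"
    then have "(\<Sum>i<n. y i * p i) = (\<Sum>i<n. p i)" using y by (simp add: prefix_vec_def)
    with mass k show False by simp
  qed
  have "v j \<le> 1"
  proof (rule ccontr)
    assume "\<not> v j \<le> 1"
    then have "y i * p i \<le> of_bool (1 < v i) * p i" if "i < n" for i
    proof (cases "i \<le> j")
      case True
      then have "1 < v i" using \<open>\<not> v j \<le> 1\<close> mono j by force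
      then show ?thesis using that y \<theta> p by (auto simp: prefix_vec_def mult_left_le_one_le)
    qed (use that y p in \<open>simp add: prefix_vec_def\<close>)
    then have "(\<Sum>i<n. y i * p i) \<le> (\<Sum>i<n. of_bool (1 < v i) * p i)"
      by (intro sum_mono) auto
    with high mass show False by (simp add: high_mass_eq)
  qed
  moreover have "\<forall>i<n. (v j < v i \<longrightarrow> y i = 1) \<and> (v i < v j \<longrightarrow> y i = 0)"
    using mono j y by (auto simp: prefix_vec_def not_less dest: leI)
  ultimately show ?thesis
    using LP_sim_le_complementary[OF p, of "v j" v y k] v0 j mass by simp
qed

lemma alg_mass_bounds:
  assumes "\<forall>i<n. 0 \<le> p i"
  shows "0 \<le> alg_mass n k p v" "alg_mass n k p v \<le> (\<Sum>i<n. p i)"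
proof -
  have "0 \<le> (\<Sum>i\<in>{i. i < n \<and> 1 < v i}. p i)" by (intro sum_nonneg) (use assms in auto)
  moreover have "(\<Sum>i\<in>{i. i < n \<and> 1 < v i}. p i) \<le> (\<Sum>i<n. p i)"
    by (rule sum_mono2) (use assms in auto)
  ultimately show "0 \<le> alg_mass n k p v" "alg_mass n k p v \<le> (\<Sum>i<n. p i)"
    by (auto simp: alg_mass_def)
qed

text \<open>The paper's optimal prefix-form LP solution: it is the indicator of the high values, the
  all-ones vector, or the prefix of mass k, and in each case weak duality shows that it bounds
  the LP (we only need this inequality, not optimality).\<close>

lemma LP_sim_le_alg_solution:
  assumes p: "\<forall>i<n. 0 \<le> p i \<and> p i \<le> 1" and v0: "\<forall>i<n. 0 \<le> v i"
    and mono: "\<forall>i j. i \<le> j \<and> j < n \<longrightarrow> v j \<le> v i"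
  obtains y where "\<forall>i<n. 0 \<le> y i \<and> y i \<le> 1" "(\<Sum>i<n. y i * p i) = alg_mass n k p v"
    "LP_sim n k p v \<le> (\<Sum>i<n. v i * (y i * p i)) + min 0 (real k - alg_mass n k p v)"
    "real k < alg_mass n k p v \<Longrightarrow> alg_mass n k p v \<le> (\<Sum>i<n. v i * (y i * p i))"
proof -
  define H where "H = (\<Sum>i\<in>{i. i < n \<and> 1 < v i}. p i)"
  define P where "P = (\<Sum>i<n. p i)"
  have p0: "\<forall>i<n. 0 \<le> p i" using p by auto
  have "H \<le> P" unfolding H_def P_def by (rule sum_mono2) (use p in auto)
  consider (high) "real k \<le> H" | (all) "H < real k" "P \<le> real k" | (prefix) "H < real k" "real k < P"
    by linarith
  then show ?thesis
  proof cases
    case high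
    define y :: "nat \<Rightarrow> real" where "y i = of_bool (1 < v i)" for i
    have "alg_mass n k p v = H" using high \<open>H \<le> P\<close> by (auto simp: alg_mass_def H_def P_def)
    moreover have "(\<Sum>i<n. y i * p i) = H" by (simp add: y_def H_def high_mass_eq)
    moreover have "(\<Sum>i<n. y i * p i) \<le> (\<Sum>i<n. v i * (y i * p i))"
      using p by (intro sum_mono) (auto simp: y_def mult_le_cancel_right1)
    ultimately show ?thesis
      using that[of y] LP_sim_le_high_values[OF p0, of k v] high by (auto simp: y_def H_def)
  next
    case all
    then have "alg_mass n k p v = P" by (auto simp: alg_mass_def H_def P_def)
    then show ?thesis
      using that[of "\<lambda>_. 1"] LP_sim_le_all_values[OF p0 v0, of k] all by (simp add: P_def)
  next
    case prefix
    obtain j \<theta> where \<theta>: "0 \<le> \<theta>" "\<theta> \<le> 1" and mass: "(\<Sum>i<n. prefix_vec j \<theta> i * p i) = real k"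
      using prefix_vec_mass_exists[OF p0, of "real k"] prefix by (auto simp: P_def)
    have "alg_mass n k p v = real k" using prefix by (auto simp: alg_mass_def H_def P_def)
    then show ?thesis
      using that[of "prefix_vec j \<theta>"] mass prefix \<theta>
        LP_sim_le_prefix_value[OF p0 v0 mono _ _ \<theta> mass]
      by (auto simp: H_def P_def prefix_vec_def)
  qed
qed

section \<open>The guarantee of the algorithm\<close>

definition alpha_objective :: "nat \<Rightarrow> real \<Rightarrow> real \<Rightarrow> real" where
  "alpha_objective k \<tau> s = s - s / \<tau> + pois_min_mean (s * real k) k / (\<tau> * real k)"

lemma alpha_k_tau_attained:
  assumes "0 < \<tau>" "1 \<le> k"
  obtains s where "s \<in> {0..1}" "alpha_k_tau k \<tau> = alpha_objective k \<tau> s" "0 \<le> alpha_objective k \<tau> s"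
proof -
  have "continuous_on {0..1} (alpha_objective k \<tau>)"
    unfolding alpha_objective_def[abs_def] using assms
    by (auto intro!: continuous_intros continuous_on_compose2[OF continuous_on_pois_min_mean[of UNIV k]])
  from continuous_attains_sup[OF compact_Icc _ this]
  obtain s where s: "s \<in> {0..1}" "\<forall>t\<in>{0..1}. alpha_objective k \<tau> t \<le> alpha_objective k \<tau> s"
    by auto
  have "alpha_k_tau k \<tau> = alpha_objective k \<tau> s"
    unfolding alpha_k_tau_def alpha_objective_def[symmetric]
    by (rule cSup_eq_maximum) (use s in auto)
  moreover have "0 \<le> alpha_objective k \<tau> s"
    using s(2)[rule_format, of 0] by (simp add: alpha_objective_def)
  ultimately show ?thesis using that s(1) by blast
qed

text \<open>V + min 0 (k - M) bounds the LP and s (V - M) + E min(Pois(s M), k) bounds the reward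
  of the algorithm. With D = s k - E min(Pois(s k), k) the objective is s - D / (\<tau> k); for
  M \<le> k use concavity of the truncated Poisson mean and M \<le> V / \<tau>, for M > k its
  monotonicity and M \<le> V.\<close>

lemma alpha_objective_mult_le:
  assumes \<tau>: "0 < \<tau>" "\<tau> \<le> 1" and k: "1 \<le> k" and s: "0 \<le> s" "s \<le> 1"
    and M: "0 \<le> M" and V: "\<tau> * M \<le> V" and VM: "real k < M \<Longrightarrow> M \<le> V"
  shows "alpha_objective k \<tau> s * (V + min 0 (real k - M)) \<le> s * (V - M) + pois_min_mean (s * M) k"
proof -
  define E where "E = pois_min_mean (s * real k) k"
  define D where "D = s * real k - E"
  have k0: "0 < real k" using k by simp
  have "0 \<le> D" using pois_min_mean_le[of "s * real k" k] s by (simp add: D_def E_def)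
  have alpha: "alpha_objective k \<tau> s = s - D / (\<tau> * real k)"
    using \<tau> k0 by (simp add: alpha_objective_def D_def E_def field_simps)
  show ?thesis
  proof (cases "M \<le> real k")
    case True
    have "(M / real k) * E \<le> pois_min_mean ((M / real k) * (s * real k)) k"
      unfolding E_def by (rule pois_min_mean_scale) (use s k0 M True in auto)
    then have scaled: "s * M - D * M / real k \<le> pois_min_mean (s * M) k"
      using k0 by (simp add: D_def field_simps)
    have "D * M / real k \<le> D * V / (\<tau> * real k)"
    proof -
      have "M \<le> V / \<tau>" using V \<tau> by (simp add: field_simps)
      then have "D * M / real k \<le> D * (V / \<tau>) / real k"
        using \<open>0 \<le> D\<close> k0 by (intro divide_right_mono mult_left_mono) auto
      then show ?thesis by simp
    qed
    with scaled True show ?thesis unfolding alpha by (simp add: algebra_simps)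
  next
    case False
    have "s - D / (\<tau> * real k) \<le> s" using \<open>0 \<le> D\<close> \<tau> k0 by simp
    moreover have "(s - D / (\<tau> * real k)) * real k \<le> E"
    proof -
      have "D \<le> D / \<tau>" using \<open>0 \<le> D\<close> \<tau> by (simp add: field_simps mult_left_le)
      moreover have "(s - D / (\<tau> * real k)) * real k = s * real k - D / \<tau>"
        using k0 \<tau> by (simp add: field_simps)
      ultimately show ?thesis by (simp add: D_def)
    qed
    moreover have "E \<le> pois_min_mean (s * M) k"
      unfolding E_def by (rule pois_min_mean_mono) (use s k0 False in \<open>auto intro: mult_left_mono\<close>)
    moreover have "min 0 (real k - M) = real k - M" using False by simp
    moreover have "M \<le> V" using VM False by simp
    ultimately have "(s - D / (\<tau> * real k)) * (V - M) + (s - D / (\<tau> * real k)) * real k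
        \<le> s * (V - M) + pois_min_mean (s * M) k"
      by (intro add_mono mult_right_mono) auto
    moreover have "a * (V + (real k - M)) = a * (V - M) + a * real k" for a :: real
      by (simp add: algebra_simps)
    ultimately show ?thesis
      unfolding alpha \<open>min 0 (real k - M) = real k - M\<close> by simp
  qed
qed

lemma alg_offer_vec_exists:
  assumes "\<forall>i<n. 0 \<le> p i" "s \<in> {0..1}"
  obtains y' where "alg_offer_vec n k p v s y'"
proof -
  have "0 \<le> s * alg_mass n k p v" "s * alg_mass n k p v \<le> (\<Sum>i<n. p i)"
    using alg_mass_bounds[OF assms(1), of k v] assms(2)
    by (auto intro: mult_left_le_one_le order_trans)
  from prefix_form_mass_exists[OF assms(1) this] that show ?thesis
    unfolding alg_offer_vec_def by blast
qed

lemma policy_reward_alg_ge: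
  assumes \<tau>: "0 < \<tau>" "\<tau> < 1" and k: "1 \<le> k"
    and p: "\<forall>i<n. 0 \<le> p i \<and> p i \<le> 1" and v0: "\<forall>i<n. 0 \<le> v i"
    and mono: "\<forall>i j. i \<le> j \<and> j < n \<longrightarrow> v j \<le> v i" and v\<tau>: "\<forall>i<n. \<tau> \<le> v i"
    and s: "s \<in> {0..1}" and alpha: "0 \<le> alpha_objective k \<tau> s"
    and y': "alg_offer_vec n k p v s y'"
  shows "alpha_objective k \<tau> s * LP_sim n k p v \<le> policy_reward k p v (indep_offer n y')"
proof -
  define M where "M = alg_mass n k p v"
  obtain y where y: "\<forall>i<n. 0 \<le> y i \<and> y i \<le> 1" and mass: "(\<Sum>i<n. y i * p i) = M"
    and LP: "LP_sim n k p v \<le> (\<Sum>i<n. v i * (y i * p i)) + min 0 (real k - M)"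
    and VM: "real k < M \<Longrightarrow> M \<le> (\<Sum>i<n. v i * (y i * p i))"
    using LP_sim_le_alg_solution[OF p v0 mono] unfolding M_def by blast
  define V where "V = (\<Sum>i<n. v i * (y i * p i))"
  have "\<tau> * M \<le> V"
    unfolding V_def mass[symmetric] sum_distrib_left
    using v\<tau> y p by (intro sum_mono mult_right_mono) auto
  have y': "prefix_form n y'" "(\<Sum>i<n. y' i * p i) = s * M"
    using y' by (auto simp: alg_offer_vec_def M_def)
  have y'_bounds: "\<forall>i<n. 0 \<le> y' i \<and> y' i \<le> 1" by (rule prefix_form_bounds[OF y'(1)])
  have "s * (V - M) = s * (\<Sum>i<n. (v i - 1) * (y i * p i))"
    by (simp add: V_def mass[symmetric] algebra_simps sum_subtractf)
  also have "\<dots> \<le> (\<Sum>i<n. (v i - 1) * (y' i * p i))"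
    using prefix_form_weighted_sum_ge[OF y'(1) y, of p "\<lambda>i. v i - 1" s] p mono s y'(2) mass by auto
  finally have "s * (V - M) + pois_min_mean (s * M) k \<le> policy_reward k p v (indep_offer n y')"
    using pois_min_mean_le_subset_expectation[of "{0..<n}" "\<lambda>i. y' i * p i" k] y'_bounds p y'(2)
    by (auto simp: policy_reward_indep_offer_split[OF y'_bounds] atLeast0LessThan mult_le_one)
  moreover have "alpha_objective k \<tau> s * LP_sim n k p v
      \<le> alpha_objective k \<tau> s * (V + min 0 (real k - M))"
    using LP alpha by (simp add: V_def mult_left_mono)
  moreover have "alpha_objective k \<tau> s * (V + min 0 (real k - M)) \<le> s * (V - M) + pois_min_mean (s * M) k"
    using alpha_objective_mult_le[OF \<tau>(1) _ k _ _ _ \<open>\<tau> * M \<le> V\<close>] \<tau>(2) s VM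
      alg_mass_bounds(1)[of n p k v] p
    by (auto simp: M_def V_def)
  ultimately show ?thesis by linarith
qed

lemma policy_reward_prefix_le_det_reward:
  assumes "prefix_form n y"
  shows "\<exists>m\<le>n. policy_reward k p v (indep_offer n y) \<le> det_reward k p v {0..<m}"
  using subset_expectation_prefix_le[OF assms]
  by (simp add: policy_reward_indep_offer[OF prefix_form_bounds[OF assms]])

theorem theorem6p1:
  fixes n k :: nat and p v :: "nat \<Rightarrow> real" and \<tau> :: real
  assumes "0 < \<tau>" and "\<tau> < 1"
    and "1 \<le> k" and "k \<le> n"
    and "\<forall>i<n. 0 \<le> p i \<and> p i \<le> 1"
    and "\<forall>i<n. 0 \<le> v i"
    and "\<forall>i j. i \<le> j \<and> j < n \<longrightarrow> v j \<le> v i"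
    and "\<forall>i<n. \<tau> \<le> v i"
  shows "(\<exists>s\<in>{0..1}. (\<exists>y'. alg_offer_vec n k p v s y') \<and>
           (\<forall>y'. alg_offer_vec n k p v s y' \<longrightarrow>
              policy_reward k p v (indep_offer n y') \<ge> alpha_k_tau k \<tau> * LP_sim n k p v))
       \<and> (\<exists>m\<le>n. det_reward k p v {0..<m} \<ge> alpha_k_tau k \<tau> * OPT_sim n k p v)"
proof -
  have p0: "\<forall>i<n. 0 \<le> p i" using assms(5) by auto
  obtain s where s: "s \<in> {0..1}" and alpha: "alpha_k_tau k \<tau> = alpha_objective k \<tau> s"
    and alpha_nonneg: "0 \<le> alpha_objective k \<tau> s"
    using alpha_k_tau_attained[OF assms(1,3)] by blast
  have ALG: "alpha_k_tau k \<tau> * LP_sim n k p v \<le> policy_reward k p v (indep_offer n y')"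
    if "alg_offer_vec n k p v s y'" for y'
    unfolding alpha by (rule policy_reward_alg_ge[OF assms(1-3) assms(5-8) s alpha_nonneg that])
  obtain y' where y': "alg_offer_vec n k p v s y'" using alg_offer_vec_exists[OF p0 s] .
  then have "prefix_form n y'" by (simp add: alg_offer_vec_def)
  then obtain m where "m \<le> n" and m: "policy_reward k p v (indep_offer n y') \<le> det_reward k p v {0..<m}"
    using policy_reward_prefix_le_det_reward by blast
  have "alpha_k_tau k \<tau> * OPT_sim n k p v \<le> alpha_k_tau k \<tau> * LP_sim n k p v"
    using OPT_sim_le_LP_sim[OF assms(5)] alpha alpha_nonneg by (simp add: mult_left_mono)
  with ALG[OF y'] m have "alpha_k_tau k \<tau> * OPT_sim n k p v \<le> det_reward k p v {0..<m}"
    by linarith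
  with s y' ALG \<open>m \<le> n\<close> show ?thesis by blast
qed

end
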